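(* Let $p$ be a prime, $C\subseteq\mathbb{F}_p^{2n}$ a symplectic self-orthogonal code with stabilizer code $Q(C)\subseteq\mathbb{C}^{p^n}$, and let $\emptyset\neq I\subsetneq J\subsetneq\{1,\dots,n\}$. If $Q(C)$ is $(I,J)$-locally recoverable, then \[\sigma_I\left[\pi_J\left(C^{\perp_s}\right)\right]=\sigma_I(C).\]
   Context: Vectors of $\mathbb{F}_p^{2n}$ are written $(\mathbf a|\mathbf b)$, coordinate pairs $(a_j,b_j)$ indexed by $j\in\{1,\dots,n\}$. Symplectic form: $(\mathbf a|\mathbf b)\cdot_s(\mathbf c|\mathbf d)=\mathbf a\cdot\mathbf d-\mathbf b\cdot\mathbf c$; $C^{\perp_s}$ is the dual; $C$ is symplectic self-orthogonal if $C\subseteq C^{\perp_s}$. For $R\subseteq\{1,\dots,n\}$: $\pi_R(\mathbf a|\mathbf b)=(a_j|b_j)_{j\in R}$, puncturing $\pi_R(D)=\{\pi_R(\mathbf y):\mathbf y\in D\}$, shortening $\sigma_R(D)=\{\pi_R(\mathbf y):\mathbf y=(\mathbf a|\mathbf b)\in D,\ \mathrm{supp}(\mathbf a)\cup\mathrm{supp}(\mathbf b)\subseteq R\}$; the shortening at $I$ of a code with coordinate pairs indexed by $J\supseteq I$ is defined the same way. Quantum setting: $\xi=e^{2\pi\iota/p}$, $X(a)|x\rangle=|x+a\rangle$, $Z(b)|x\rangle=\xi^{bx}|x\rangle$ on $\mathbb C^p$, $E_{(\mathbf a,\mathbf b)}=\bigotimes_jX(a_j)Z(b_j)$. $Q(C)$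 is the common eigenspace $\{v:Ev=\lambda(E)v\ \forall E\in S\}$, $S$ the commutative group generated by scalars $\xi^\ell\mathcal I$ and $E_{\mathbf y}$, $\mathbf y\in C$, $\lambda$ a character of $S$ with $\lambda(\xi\mathcal I)=\xi$. Let $\Gamma(\rho)=p^{-2}\sum_{a,b}X(a)Z(b)\rho(X(a)Z(b))^\dagger$, and $\Gamma^I$ apply $\Gamma$ to the qudits indexed by $I$ and the identity elsewhere. For $\emptyset\ne I\subsetneq J$, a code $Q$ is $(I,J)$-locally recoverable if there is a trace-preserving quantum operation $\mathcal R$ acting only on the qudits indexed by $J$ (identity on the others) with $\mathcal R\circ\Gamma^I(|\varphi\rangle\langle\varphi|)=|\varphi\rangle\langle\varphi|$ for all $|\varphi\rangle\in Q$. *)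

theory Defs
  imports Complex_Main "HOL-Computational_Algebra.Primes"
begin

text \<open>Elements of F_p are represented by naturals below p. A vector (a|b) of F_p^{2n}
  (or more generally with coordinate pairs indexed by a finite set S) is a pair of functions
  nat => nat with values below p on S and value 0 outside S.\<close>

type_synonym svec = "(nat \<Rightarrow> nat) \<times> (nat \<Rightarrow> nat)"

definition basisOn :: "nat set \<Rightarrow> nat \<Rightarrow> (nat \<Rightarrow> nat) set" where
  "basisOn S p = {x. (\<forall>j\<in>S. x j < p) \<and> (\<forall>j. j \<notin> S \<longrightarrow> x j = 0)}"

definition Fvec :: "nat set \<Rightarrow> nat \<Rightarrow> svec set" where
  "Fvec S p = basisOn S p \<times> basisOn S p"

definition vadd :: "nat \<Rightarrow> svec \<Rightarrow> svec \<Rightarrow> svec" where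
  "vadd p y z = ((\<lambda>j. (fst y j + fst z j) mod p), (\<lambda>j. (snd y j + snd z j) mod p))"

definition vscale :: "nat \<Rightarrow> nat \<Rightarrow> svec \<Rightarrow> svec" where
  "vscale p c y = ((\<lambda>j. (c * fst y j) mod p), (\<lambda>j. (c * snd y j) mod p))"

definition is_code :: "nat \<Rightarrow> nat \<Rightarrow> svec set \<Rightarrow> bool" where
  "is_code n p C \<longleftrightarrow> C \<subseteq> Fvec {1..n} p \<and> ((\<lambda>_. 0), (\<lambda>_. 0)) \<in> C
     \<and> (\<forall>y\<in>C. \<forall>z\<in>C. vadd p y z \<in> C) \<and> (\<forall>c<p. \<forall>y\<in>C. vscale p c y \<in> C)"

definition symp_orth :: "nat \<Rightarrow> nat \<Rightarrow> svec \<Rightarrow> svec \<Rightarrow> bool" where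
  "symp_orth n p y z \<longleftrightarrow>
     (\<Sum>j\<in>{1..n}. fst y j * snd z j) mod p = (\<Sum>j\<in>{1..n}. snd y j * fst z j) mod p"

definition symp_dual :: "nat \<Rightarrow> nat \<Rightarrow> svec set \<Rightarrow> svec set" where
  "symp_dual n p C = {z \<in> Fvec {1..n} p. \<forall>y\<in>C. symp_orth n p y z}"

definition restrict_to :: "(nat \<Rightarrow> nat) \<Rightarrow> nat set \<Rightarrow> nat \<Rightarrow> nat" where
  "restrict_to x R = (\<lambda>j. if j \<in> R then x j else 0)"

definition proj :: "nat set \<Rightarrow> svec \<Rightarrow> svec" where
  "proj R y = (restrict_to (fst y) R, restrict_to (snd y) R)"

definition puncture :: "nat set \<Rightarrow> svec set \<Rightarrow> svec set" where
  "puncture R D = proj R ` D"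

definition supp :: "svec \<Rightarrow> nat set" where
  "supp y = {j. fst y j \<noteq> 0} \<union> {j. snd y j \<noteq> 0}"

definition shorten :: "nat set \<Rightarrow> svec set \<Rightarrow> svec set" where
  "shorten R D = proj R ` {y \<in> D. supp y \<subseteq> R}"

text \<open>Computational basis states of n qudits: functions in basisOn {1..n} p.
  Vectors of C^(p^n): functions on basis states (zero off the basis).
  Operators: matrices indexed by basis states (zero off the basis).\<close>

type_synonym qvec = "(nat \<Rightarrow> nat) \<Rightarrow> complex"
type_synonym qop = "(nat \<Rightarrow> nat) \<Rightarrow> (nat \<Rightarrow> nat) \<Rightarrow> complex"

definition xi :: "nat \<Rightarrow> int \<Rightarrow> complex" where
  "xi p l = cis (2 * pi * of_int l / of_nat p)"

definition opmult :: "(nat \<Rightarrow> nat) set \<Rightarrow> qop \<Rightarrow> qop \<Rightarrow> qop" where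
  "opmult B X Y = (\<lambda>x y. \<Sum>z\<in>B. X x z * Y z y)"

definition opapply :: "(nat \<Rightarrow> nat) set \<Rightarrow> qop \<Rightarrow> qvec \<Rightarrow> qvec" where
  "opapply B X v = (\<lambda>x. \<Sum>z\<in>B. X x z * v z)"

definition adj :: "qop \<Rightarrow> qop" where
  "adj X = (\<lambda>x y. cnj (X y x))"

definition idop :: "(nat \<Rightarrow> nat) set \<Rightarrow> qop" where
  "idop B = (\<lambda>x y. if x \<in> B \<and> x = y then 1 else 0)"

definition scaleop :: "complex \<Rightarrow> qop \<Rightarrow> qop" where
  "scaleop c X = (\<lambda>x y. c * X x y)"

definition opsum :: "nat \<Rightarrow> (nat \<Rightarrow> qop) \<Rightarrow> qop" where
  "opsum m F = (\<lambda>x y. \<Sum>k<m. F k x y)"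

definition outer :: "qvec \<Rightarrow> qop" where
  "outer v = (\<lambda>x y. v x * cnj (v y))"

text \<open>The Pauli operator E_(a,b) = tensor_j X(a_j) Z(b_j) on n qudits:
  E_(a,b) |x> = xi^(b.x) |x + a>.\<close>
definition pauliE :: "nat \<Rightarrow> nat \<Rightarrow> svec \<Rightarrow> qop" where
  "pauliE n p y = (\<lambda>u x.
     if u \<in> basisOn {1..n} p \<and> x \<in> basisOn {1..n} p \<and>
        (\<forall>j\<in>{1..n}. u j = (x j + fst y j) mod p)
     then xi p (int (\<Sum>j\<in>{1..n}. snd y j * x j)) else 0)"

text \<open>The stabilizer group S: generated (under multiplication) by the scalars xi^l I and
  the E_y, y in C. (All generators have finite order, so closure under products already
  yields the generated group.)\<close>
inductive_set stabGroup :: "nat \<Rightarrow> nat \<Rightarrow> svec set \<Rightarrow> qop set"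
  for n p C where
  scal: "scaleop (xi p l) (idop (basisOn {1..n} p)) \<in> stabGroup n p C"
| gen: "y \<in> C \<Longrightarrow> pauliE n p y \<in> stabGroup n p C"
| mult: "X \<in> stabGroup n p C \<Longrightarrow> Y \<in> stabGroup n p C \<Longrightarrow>
         opmult (basisOn {1..n} p) X Y \<in> stabGroup n p C"

definition is_stab_character :: "nat \<Rightarrow> nat \<Rightarrow> svec set \<Rightarrow> (qop \<Rightarrow> complex) \<Rightarrow> bool" where
  "is_stab_character n p C lam \<longleftrightarrow>
     (\<forall>X\<in>stabGroup n p C. \<forall>Y\<in>stabGroup n p C.
        lam (opmult (basisOn {1..n} p) X Y) = lam X * lam Y)
     \<and> lam (scaleop (xi p 1) (idop (basisOn {1..n} p))) = xi p 1"

definition stabQ :: "nat \<Rightarrow> nat \<Rightarrow> svec set \<Rightarrow> (qop \<Rightarrow> complex) \<Rightarrow> qvec set" where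
  "stabQ n p C lam = {v. (\<forall>x. x \<notin> basisOn {1..n} p \<longrightarrow> v x = 0) \<and>
     (\<forall>X\<in>stabGroup n p C. \<forall>x\<in>basisOn {1..n} p.
        opapply (basisOn {1..n} p) X v x = lam X * v x)}"

text \<open>Gamma^I: the completely depolarizing channel on each qudit in I, identity elsewhere;
  the tensor product of the single-qudit maps is
  p^(-2|I|) * sum over (a|b) supported on I of E_(a,b) rho E_(a,b)^dagger.\<close>
definition GammaI :: "nat \<Rightarrow> nat \<Rightarrow> nat set \<Rightarrow> qop \<Rightarrow> qop" where
  "GammaI n p I rho = (\<lambda>x y. (1 / of_nat p ^ (2 * card I)) *
     (\<Sum>e\<in>Fvec I p. opmult (basisOn {1..n} p)
         (opmult (basisOn {1..n} p) (pauliE n p e) rho) (adj (pauliE n p e)) x y))"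

text \<open>B tensor identity: B acts on the qudits indexed by J (B is a matrix indexed by
  basisOn J p), identity on the qudits in {1..n} - J.\<close>
definition tensJ :: "nat \<Rightarrow> nat \<Rightarrow> nat set \<Rightarrow> qop \<Rightarrow> qop" where
  "tensJ n p J Bop = (\<lambda>x y.
     if x \<in> basisOn {1..n} p \<and> y \<in> basisOn {1..n} p \<and>
        restrict_to x ({1..n} - J) = restrict_to y ({1..n} - J)
     then Bop (restrict_to x J) (restrict_to y J) else 0)"

text \<open>A trace-preserving quantum operation on the J-register, in operator-sum (Kraus) form:
  Kraus operators B_0..B_(m-1) on basisOn J p with sum B_k^dagger B_k = I.\<close>
definition kraus_TP :: "nat \<Rightarrow> nat set \<Rightarrow> nat \<Rightarrow> (nat \<Rightarrow> qop) \<Rightarrow> bool" where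
  "kraus_TP p J m Bk \<longleftrightarrow>
     (\<forall>x\<in>basisOn J p. \<forall>y\<in>basisOn J p.
        opsum m (\<lambda>k. opmult (basisOn J p) (adj (Bk k)) (Bk k)) x y = idop (basisOn J p) x y)"

definition applyR :: "nat \<Rightarrow> nat \<Rightarrow> nat set \<Rightarrow> nat \<Rightarrow> (nat \<Rightarrow> qop) \<Rightarrow> qop \<Rightarrow> qop" where
  "applyR n p J m Bk rho = opsum m (\<lambda>k.
     opmult (basisOn {1..n} p) (opmult (basisOn {1..n} p) (tensJ n p J (Bk k)) rho)
       (adj (tensJ n p J (Bk k))))"

definition locally_recoverable :: "nat \<Rightarrow> nat \<Rightarrow> nat set \<Rightarrow> nat set \<Rightarrow> qvec set \<Rightarrow> bool" where
  "locally_recoverable n p I J Q \<longleftrightarrow>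
     (\<exists>m Bk. kraus_TP p J m Bk \<and>
        (\<forall>\<phi>\<in>Q. \<forall>x\<in>basisOn {1..n} p. \<forall>y\<in>basisOn {1..n} p.
           applyR n p J m Bk (GammaI n p I (outer \<phi>)) x y = outer \<phi> x y))"

end

(*
  Let y be in the symplectic dual of C with pi_J(y) supported in I, and split y = w + z with
  z supported on I and w supported outside J. Local recoverability yields the Knill-Laflamme
  condition: for every phi in Q(C), each vector R_k E_e phi (R_k a Kraus operator on J, e supported
  on I) is a multiple of phi, not all multiples being zero. Applying this to phi and to E_y phi,
  which lies in Q(C) because E_y commutes with the stabilizer, and moving E_w (which acts outside J)
  past R_k and E_e shows that E_z acts on Q(C) as a scalar s. This forces z into C: otherwise
  E_z P has trace zero, where P = sum_c lambda(E_c)^-1 E_c, whereas E_z P = s P and P has trace p^n,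
  so s = 0, contradicting the invertibility of E_z. Hence pi_I(y) = z lies in C; the reverse
  inclusion holds because C is contained in its symplectic dual.
*)
theory Submission
  imports Defs "HOL-Number_Theory.Cong"
begin

(* Otherwise the simplifier rewrites {1..n} to {Suc 0..n}, and lemmas about basisOn {1..n} p
   no longer apply. *)
declare One_nat_def [simp del]

lemma xi_add: "xi p a * xi p b = xi p (a + b)"
  unfolding xi_def by (simp add: cis_mult add_divide_distrib distrib_left)

lemma xi_nonzero: "xi p a \<noteq> 0"
  unfolding xi_def by simp

lemma xi_0 [simp]: "xi p 0 = 1"
  unfolding xi_def by simp

lemma xi_cong:
  assumes "p > 0" "[a = b] (mod int p)"
  shows "xi p a = xi p b"
proof -
  obtain k where k: "a = b + int p * k"
    using assms(2) by (metis cong_iff_lin cong_sym)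
  have "2 * pi * real_of_int a / real p = 2 * pi * real_of_int b / real p + 2 * pi * real_of_int k"
    using assms(1) by (simp add: k field_simps)
  then show ?thesis
    unfolding xi_def by (simp add: cis_mult[symmetric])
qed

lemma xi_nat_cong: "p > 0 \<Longrightarrow> [a = b] (mod p) \<Longrightarrow> xi p (int a) = xi p (int b)"
  by (rule xi_cong) (simp_all add: cong_int_iff)

lemma xi_ne_1:
  assumes "0 < b" "b < p"
  shows "xi p (int b) \<noteq> 1"
proof
  assume "xi p (int b) = 1"
  then have "cos (2 * pi * real b / real p) = 1"
    unfolding xi_def by (simp add: complex_eq_iff)
  then obtain m :: int where "2 * pi * real b / real p = real_of_int m * 2 * pi"
    by (subst (asm) cos_one_2pi_int) blast
  then have "real b = real_of_int m * real p" using assms by (simp add: field_simps)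
  then have "int b = m * int p" by (metis of_int_eq_iff of_int_mult of_int_of_nat_eq)
  show False
  proof (cases "m \<le> 0")
    case True
    then have "m * int p \<le> 0" by (simp add: mult_nonpos_nonneg)
    with \<open>int b = m * int p\<close> assms show False by simp
  next
    case False
    then have "1 * int p \<le> m * int p" by (intro mult_right_mono) simp_all
    with \<open>int b = m * int p\<close> assms show False by linarith
  qed
qed

abbreviation states :: "nat \<Rightarrow> nat \<Rightarrow> (nat \<Rightarrow> nat) set" where
  "states n p \<equiv> basisOn {1..n} p"

lemma finite_basisOn: "finite S \<Longrightarrow> finite (basisOn S p)"
proof -
  assume "finite S"
  have "basisOn S p = {f. \<forall>x. (x \<in> S \<longrightarrow> f x \<in> {..<p}) \<and> (x \<notin> S \<longrightarrow> f x = 0)}"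
    unfolding basisOn_def by auto
  then show ?thesis using finite_set_of_finite_funs[OF \<open>finite S\<close>, of "{..<p}" 0] by simp
qed

lemma finite_states: "finite (states n p)"
  by (simp add: finite_basisOn)

lemma finite_Fvec: "finite S \<Longrightarrow> finite (Fvec S p)"
  unfolding Fvec_def by (simp add: finite_basisOn)

lemma basisOn_outside: "a \<in> basisOn R p \<Longrightarrow> j \<notin> R \<Longrightarrow> a j = 0"
  unfolding basisOn_def by blast

lemma basisOn_less: "a \<in> basisOn R p \<Longrightarrow> j \<in> R \<Longrightarrow> a j < p"
  unfolding basisOn_def by blast

lemma basisOn_mono: "p > 0 \<Longrightarrow> S \<subseteq> T \<Longrightarrow> basisOn S p \<subseteq> basisOn T p"
  unfolding basisOn_def by (smt (verit) Collect_mono subsetD)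

lemma Fvec_mono: "p > 0 \<Longrightarrow> S \<subseteq> T \<Longrightarrow> Fvec S p \<subseteq> Fvec T p"
  unfolding Fvec_def using basisOn_mono by blast

lemma vadd_commute: "vadd p y z = vadd p z y"
  unfolding vadd_def by (simp add: add.commute)

lemma vadd_Fvec: "p > 0 \<Longrightarrow> y \<in> Fvec S p \<Longrightarrow> z \<in> Fvec S p \<Longrightarrow> vadd p y z \<in> Fvec S p"
  unfolding Fvec_def basisOn_def vadd_def by auto

lemma vscale_Fvec: "p > 0 \<Longrightarrow> y \<in> Fvec S p \<Longrightarrow> vscale p c y \<in> Fvec S p"
  unfolding Fvec_def basisOn_def vscale_def by auto

lemma vadd_vscale_minus_one:
  assumes "p > 0"
  shows "vadd p (vscale p (p - 1) y) y = ((\<lambda>_. 0), (\<lambda>_. 0))"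
proof -
  have "((p - 1) * a mod p + a) mod p = 0" for a :: nat
  proof -
    have "(p - 1) * a + a = p * a" using assms by (simp add: algebra_simps)
    then show ?thesis by (simp add: mod_add_left_eq)
  qed
  then show ?thesis unfolding vadd_def vscale_def by simp
qed

lemma vadd_left_cancel:
  assumes "y \<in> Fvec S p" "z1 \<in> Fvec S p" "z2 \<in> Fvec S p" "vadd p y z1 = vadd p y z2"
  shows "z1 = z2"
proof -
  have cancel: "u1 = u2" if "(a + u1) mod p = (a + u2) mod p" "u1 < p" "u2 < p" for a u1 u2 :: nat
    using that cong_add_lcancel_nat[of a u1 u2 p] unfolding cong_def by simp
  have "fst z1 j = fst z2 j \<and> snd z1 j = snd z2 j" for j
  proof (cases "j \<in> S")
    case True
    then show ?thesis
      using assms cancel[of "fst y j" "fst z1 j" "fst z2 j"] cancel[of "snd y j" "snd z1 j" "snd z2 j"]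
      unfolding vadd_def Fvec_def basisOn_def by (auto dest: fun_cong[where x=j])
  next
    case False
    then show ?thesis using assms unfolding Fvec_def basisOn_def by auto
  qed
  then show ?thesis by (simp add: prod_eq_iff fun_eq_iff)
qed

lemma vadd_eq_0_imp:
  assumes "p > 0" "z \<in> Fvec S p" "c \<in> Fvec S p" "vadd p z c = ((\<lambda>_. 0), (\<lambda>_. 0))"
  shows "z = vscale p (p - 1) c"
proof (rule vadd_left_cancel[OF assms(3,2) vscale_Fvec[OF assms(1,3)]])
  show "vadd p c z = vadd p c (vscale p (p - 1) c)"
    using assms(4) vadd_vscale_minus_one[OF assms(1)] by (simp add: vadd_commute)
qed

lemma proj_in_Fvec: "y \<in> Fvec S p \<Longrightarrow> R \<subseteq> S \<Longrightarrow> proj R y \<in> Fvec R p"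
  unfolding proj_def restrict_to_def Fvec_def basisOn_def by auto

lemma proj_proj: "proj I (proj J y) = proj (I \<inter> J) y"
  unfolding proj_def restrict_to_def by (auto simp: fun_eq_iff)

lemma supp_proj: "supp (proj R y) = supp y \<inter> R"
  unfolding supp_def proj_def restrict_to_def by auto

lemma vadd_proj_split:
  assumes y: "y \<in> Fvec {1..n} p" and IJ: "I \<subseteq> J" and supp: "supp y \<inter> J \<subseteq> I"
  shows "vadd p (proj ({1..n} - J) y) (proj I y) = y"
proof -
  have "fst y j = 0 \<and> snd y j = 0" if "j \<in> J" "j \<notin> I" for j
  proof -
    have "j \<notin> supp y" using supp that by blast
    then show ?thesis unfolding supp_def by simp
  qed
  moreover have "fst y j mod p = fst y j \<and> snd y j mod p = snd y j" for j
    using y unfolding Fvec_def basisOn_def by (cases "j \<in> {1..n}") auto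
  moreover have "fst y j = 0 \<and> snd y j = 0" if "j \<notin> {1..n}" for j
    using y that unfolding Fvec_def basisOn_def by auto
  ultimately show ?thesis
    using IJ unfolding vadd_def proj_def restrict_to_def by (auto simp: prod_eq_iff fun_eq_iff)
qed

lemma shorten_puncture_eq_shorten:
  assumes IJ: "I \<subseteq> J" and CD: "C \<subseteq> D"
    and restrict: "\<And>y. y \<in> D \<Longrightarrow> supp y \<inter> J \<subseteq> I \<Longrightarrow> proj I y \<in> C"
  shows "shorten I (puncture J D) = shorten I C"
proof -
  have "{y' \<in> proj J ` D. supp y' \<subseteq> I} = proj J ` {y \<in> D. supp y \<inter> J \<subseteq> I}"
    by (auto simp: supp_proj)
  then have "shorten I (puncture J D) = (\<lambda>y. proj I (proj J y)) ` {y \<in> D. supp y \<inter> J \<subseteq> I}"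
    unfolding shorten_def puncture_def by (simp add: image_image)
  also have "\<dots> = proj I ` {y \<in> D. supp y \<inter> J \<subseteq> I}"
    using IJ by (simp add: proj_proj Int_absorb2)
  also have "\<dots> = shorten I C"
  proof
    show "proj I ` {y \<in> D. supp y \<inter> J \<subseteq> I} \<subseteq> shorten I C"
    proof (rule image_subsetI)
      fix y assume "y \<in> {y \<in> D. supp y \<inter> J \<subseteq> I}"
      then have "proj I y \<in> {c \<in> C. supp c \<subseteq> I}"
        using restrict by (auto simp: supp_proj)
      then have "proj I (proj I y) \<in> proj I ` {c \<in> C. supp c \<subseteq> I}" by (rule imageI)
      then show "proj I y \<in> shorten I C"
        unfolding shorten_def by (simp add: proj_proj)
    qed
    show "shorten I C \<subseteq> proj I ` {y \<in> D. supp y \<inter> J \<subseteq> I}"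
      using CD unfolding shorten_def by auto
  qed
  finally show ?thesis .
qed

lemma opapply_opmult:
  assumes "finite B"
  shows "opapply B (opmult B X Y) v = opapply B X (opapply B Y v)"
proof
  fix x
  have "opapply B (opmult B X Y) v x = (\<Sum>z\<in>B. \<Sum>t\<in>B. X x t * Y t z * v z)"
    unfolding opapply_def opmult_def by (simp add: sum_distrib_right)
  also have "\<dots> = (\<Sum>t\<in>B. \<Sum>z\<in>B. X x t * Y t z * v z)" by (rule sum.swap)
  also have "\<dots> = opapply B X (opapply B Y v) x"
    unfolding opapply_def by (simp add: sum_distrib_left mult.assoc)
  finally show "opapply B (opmult B X Y) v x = opapply B X (opapply B Y v) x" .
qed

lemma opapply_cong: "(\<And>x. x \<in> B \<Longrightarrow> v x = w x) \<Longrightarrow> opapply B X v = opapply B X w"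
  unfolding opapply_def by (intro ext sum.cong) auto

lemma opapply_scale: "opapply B X (\<lambda>x. c * v x) = (\<lambda>x. c * opapply B X v x)"
  unfolding opapply_def by (simp add: sum_distrib_left mult.left_commute)

lemma opapply_add: "opapply B X (\<lambda>x. v x + w x) = (\<lambda>x. opapply B X v x + opapply B X w x)"
  unfolding opapply_def by (simp add: distrib_left sum.distrib)

lemma opapply_diff: "opapply B X (\<lambda>x. v x - w x) = (\<lambda>x. opapply B X v x - opapply B X w x)"
  unfolding opapply_def by (simp add: algebra_simps sum_subtractf)

lemma opapply_scaleop: "opapply B (scaleop a X) v = (\<lambda>x. a * opapply B X v x)"
  unfolding opapply_def scaleop_def by (simp add: sum_distrib_left mult_ac)

lemma opapply_idop: "finite B \<Longrightarrow> x \<in> B \<Longrightarrow> opapply B (idop B) v x = v x"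
  unfolding opapply_def idop_def by (simp add: if_distrib[where f="\<lambda>c. c * _"] cong: if_cong)

lemma scaleop_one [simp]: "scaleop 1 X = X"
  unfolding scaleop_def by simp

lemma scaleop_scaleop [simp]: "scaleop a (scaleop b X) = scaleop (a * b) X"
  unfolding scaleop_def by (simp add: mult.assoc)

lemma opapply_column: "opapply B X (\<lambda>u. Y u x) = (\<lambda>u. opmult B X Y u x)"
  unfolding opapply_def opmult_def ..

lemma opmult_assoc:
  assumes "finite B"
  shows "opmult B (opmult B X Y) Z = opmult B X (opmult B Y Z)"
proof (intro ext)
  fix u x
  have "opmult B (opmult B X Y) Z u x = (\<Sum>s\<in>B. \<Sum>t\<in>B. X u t * Y t s * Z s x)"
    unfolding opmult_def by (simp add: sum_distrib_right)
  also have "\<dots> = (\<Sum>t\<in>B. \<Sum>s\<in>B. X u t * Y t s * Z s x)" by (rule sum.swap)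
  also have "\<dots> = opmult B X (opmult B Y Z) u x"
    unfolding opmult_def by (simp add: sum_distrib_left mult.assoc)
  finally show "opmult B (opmult B X Y) Z u x = opmult B X (opmult B Y Z) u x" .
qed

lemma opmult_scaleop_right: "opmult B X (scaleop a Y) = scaleop a (opmult B X Y)"
  unfolding opmult_def scaleop_def by (simp add: sum_distrib_left mult_ac)

lemma opmult_scaleop_idop:
  assumes "finite B" "\<And>u x. u \<notin> B \<Longrightarrow> X u x = 0"
  shows "opmult B (scaleop a (idop B)) X = scaleop a X"
proof (intro ext)
  fix x y
  show "opmult B (scaleop a (idop B)) X x y = scaleop a X x y"
    using assms unfolding opmult_def scaleop_def idop_def
    by (cases "x \<in> B")
      (simp_all add: if_distrib[where f="\<lambda>c. c * _"] mult.assoc sum_distrib_left[symmetric]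
        cong: if_cong)
qed

lemma opmult_scaleop_idop_right:
  assumes "finite B" "\<And>u x. x \<notin> B \<Longrightarrow> X u x = 0"
  shows "opmult B X (scaleop a (idop B)) = scaleop a X"
proof (intro ext)
  fix u x
  show "opmult B X (scaleop a (idop B)) u x = scaleop a X u x"
    using assms unfolding opmult_def scaleop_def idop_def
    by (cases "x \<in> B") (simp_all add: if_distrib[where f="\<lambda>c. _ * c"] mult.commute cong: if_cong)
qed

lemma common_eigenvalue:
  assumes add: "\<And>u v. u \<in> V \<Longrightarrow> v \<in> V \<Longrightarrow> (\<lambda>x. u x + v x) \<in> V"
    and eig: "\<forall>\<phi>\<in>V. \<exists>s. \<forall>x\<in>B. opapply B M \<phi> x = s * \<phi> x"
    and \<phi>0: "\<phi>0 \<in> V" "x0 \<in> B" "\<phi>0 x0 \<noteq> 0"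
    and s0: "\<forall>x\<in>B. opapply B M \<phi>0 x = s0 * \<phi>0 x"
    and \<phi>: "\<phi> \<in> V"
  shows "\<forall>x\<in>B. opapply B M \<phi> x = s0 * \<phi> x"
proof -
  obtain s where s: "\<forall>x\<in>B. opapply B M \<phi> x = s * \<phi> x" using eig \<phi> by blast
  obtain s' where s': "\<forall>x\<in>B. opapply B M (\<lambda>x. \<phi> x + \<phi>0 x) x = s' * (\<phi> x + \<phi>0 x)"
    using eig add[OF \<phi> \<phi>0(1)] by blast
  have lin: "(s - s') * \<phi> x = (s' - s0) * \<phi>0 x" if "x \<in> B" for x
    using s'[unfolded opapply_add] s s0 that by (simp add: algebra_simps)
  show ?thesis
  proof (cases "s = s'")
    case True
    then have "s = s0" using lin[OF \<phi>0(2)] \<phi>0(3) by simp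
    then show ?thesis using s by simp
  next
    case False
    define t where "t = (s' - s0) / (s - s')"
    have \<phi>_eq: "\<phi> x = t * \<phi>0 x" if "x \<in> B" for x
      using lin[OF that] False unfolding t_def by (simp add: field_simps)
    have "opapply B M \<phi> = opapply B M (\<lambda>x. t * \<phi>0 x)"
      using \<phi>_eq by (rule opapply_cong)
    then show ?thesis using s0 \<phi>_eq by (simp add: opapply_scale)
  qed
qed

section \<open>Pauli operators\<close>

definition translate :: "nat \<Rightarrow> nat \<Rightarrow> (nat \<Rightarrow> nat) \<Rightarrow> (nat \<Rightarrow> nat) \<Rightarrow> nat \<Rightarrow> nat" where
  "translate n p a x = (\<lambda>j. if j \<in> {1..n} then (x j + a j) mod p else 0)"

definition dotp :: "nat \<Rightarrow> (nat \<Rightarrow> nat) \<Rightarrow> (nat \<Rightarrow> nat) \<Rightarrow> nat" where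
  "dotp n b x = (\<Sum>j\<in>{1..n}. b j * x j)"

lemma translate_in_states: "p > 0 \<Longrightarrow> translate n p a x \<in> states n p"
  unfolding translate_def basisOn_def by auto

lemma translate_translate:
  "translate n p a (translate n p b x) = translate n p (\<lambda>j. (a j + b j) mod p) x"
  unfolding translate_def by (auto simp: mod_simps add_ac)

lemma translate_zero: "x \<in> states n p \<Longrightarrow> translate n p (\<lambda>_. 0) x = x"
  unfolding translate_def basisOn_def by (auto simp: fun_eq_iff)

lemma bij_betw_translate:
  assumes "p > 0"
  shows "bij_betw (translate n p a) (states n p) (states n p)"
proof (rule bij_betw_byWitness[where f'="translate n p (\<lambda>j. (p - 1) * a j)"])
  have "c + (p - 1) * c = p * c" for c
    using assms by (cases p) auto
  then have "(c + (p - 1) * c) mod p = 0" "((p - 1) * c + c) mod p = 0" for c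
    by (simp_all add: add.commute)
  then show "\<forall>x\<in>states n p. translate n p (\<lambda>j. (p - 1) * a j) (translate n p a x) = x"
    "\<forall>x\<in>states n p. translate n p a (translate n p (\<lambda>j. (p - 1) * a j) x) = x"
    by (simp_all add: translate_translate translate_zero)
qed (use translate_in_states[OF assms] in auto)

lemma xi_dotp_translate:
  assumes "p > 0"
  shows "xi p (int (dotp n b (translate n p a x))) = xi p (int (dotp n b a)) * xi p (int (dotp n b x))"
proof -
  have "[b j * translate n p a x j = b j * a j + b j * x j] (mod p)" if "j \<in> {1..n}" for j
  proof -
    have "[b j * translate n p a x j = b j * (x j + a j)] (mod p)"
      using that unfolding translate_def by (intro cong_mult cong_refl) (simp add: cong_def)
    then show ?thesis by (simp add: algebra_simps)
  qed
  then have "[dotp n b (translate n p a x) = dotp n b a + dotp n b x] (mod p)"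
    unfolding dotp_def sum.distrib[symmetric] by (rule cong_sum)
  then show ?thesis by (simp add: xi_nat_cong[OF assms] xi_add)
qed

lemma xi_dotp_add:
  assumes "p > 0"
  shows "xi p (int (dotp n b1 x)) * xi p (int (dotp n b2 x))
       = xi p (int (dotp n (\<lambda>j. (b1 j + b2 j) mod p) x))"
proof -
  have "[b1 j * x j + b2 j * x j = ((b1 j + b2 j) mod p) * x j] (mod p)" for j
    by (simp add: cong_def mod_mult_left_eq distrib_right)
  then have "[dotp n b1 x + dotp n b2 x = dotp n (\<lambda>j. (b1 j + b2 j) mod p) x] (mod p)"
    unfolding dotp_def sum.distrib[symmetric] by (rule cong_sum)
  then have "xi p (int (dotp n b1 x + dotp n b2 x)) = xi p (int (dotp n (\<lambda>j. (b1 j + b2 j) mod p) x))"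
    by (rule xi_nat_cong[OF assms])
  then show ?thesis by (simp add: xi_add)
qed

lemma pauliE_eq:
  assumes "p > 0"
  shows "pauliE n p y u x = (if x \<in> states n p \<and> u = translate n p (fst y) x
           then xi p (int (dotp n (snd y) x)) else 0)"
proof -
  have "(u \<in> states n p \<and> (\<forall>j\<in>{1..n}. u j = (x j + fst y j) mod p)) \<longleftrightarrow> u = translate n p (fst y) x"
    using translate_in_states[OF assms] unfolding translate_def basisOn_def by (auto simp: fun_eq_iff)
  then show ?thesis unfolding pauliE_def dotp_def by auto
qed

lemma pauliE_outside_left: "u \<notin> states n p \<Longrightarrow> pauliE n p y u x = 0"
  unfolding pauliE_def by auto

lemma pauliE_outside_right: "x \<notin> states n p \<Longrightarrow> pauliE n p y u x = 0"
  unfolding pauliE_def by auto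

lemma opmult_pauliE_right:
  assumes "p > 0"
  shows "opmult (states n p) M (pauliE n p y) u x = (if x \<in> states n p
           then M u (translate n p (fst y) x) * xi p (int (dotp n (snd y) x)) else 0)"
  unfolding opmult_def pauliE_eq[OF assms] using translate_in_states[OF assms] finite_states
  by (simp add: if_distrib[where f="\<lambda>c. _ * c"] cong: if_cong)

lemma pauliE_zero:
  assumes "p > 0"
  shows "pauliE n p ((\<lambda>_. 0), (\<lambda>_. 0)) = idop (states n p)"
proof (intro ext)
  fix u x
  show "pauliE n p ((\<lambda>_. 0), (\<lambda>_. 0)) u x = idop (states n p) u x"
    unfolding pauliE_eq[OF assms] idop_def dotp_def using translate_zero[of x n p] by auto
qed

lemma pauliE_mult:
  assumes "p > 0"
  shows "opmult (states n p) (pauliE n p y1) (pauliE n p y2)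
       = scaleop (xi p (int (dotp n (snd y1) (fst y2)))) (pauliE n p (vadd p y1 y2))"
  using translate_in_states[OF assms]
  by (auto simp: fun_eq_iff opmult_pauliE_right[OF assms] pauliE_eq[OF assms] scaleop_def
      translate_translate xi_dotp_translate[OF assms] xi_dotp_add[OF assms, symmetric] mult.assoc
      vadd_def)

lemma pauliE_mult_disjoint:
  assumes "p > 0" "I \<inter> R = {}" "e \<in> Fvec I p" "w \<in> Fvec R p"
  shows "opmult (states n p) (pauliE n p e) (pauliE n p w) = pauliE n p (vadd p e w)"
proof -
  have "snd e j * fst w j = 0" for j
    using assms(2-4) unfolding Fvec_def basisOn_def by (cases "j \<in> I") auto
  then have "dotp n (snd e) (fst w) = 0" by (simp add: dotp_def)
  then show ?thesis by (simp add: pauliE_mult[OF assms(1)])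
qed

lemma pauliE_inverse:
  assumes "p > 0" "x \<in> states n p"
  shows "opapply (states n p) (pauliE n p (vscale p (p - 1) y)) (opapply (states n p) (pauliE n p y) v) x
       = xi p (int (dotp n (snd (vscale p (p - 1) y)) (fst y))) * v x"
  using assms
  by (simp add: opapply_opmult[OF finite_states, symmetric] pauliE_mult vadd_vscale_minus_one
      pauliE_zero opapply_scaleop opapply_idop finite_states)

lemma pauliE_apply_eq_0_imp:
  assumes "p > 0" "\<forall>x\<in>states n p. opapply (states n p) (pauliE n p y) v x = 0" "x \<in> states n p"
  shows "v x = 0"
proof -
  have "opapply (states n p) (pauliE n p (vscale p (p - 1) y)) (opapply (states n p) (pauliE n p y) v)
      = opapply (states n p) (pauliE n p (vscale p (p - 1) y)) (\<lambda>_. 0)"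
    using assms(2) by (intro opapply_cong) simp
  then show ?thesis
    using pauliE_inverse[OF assms(1,3), of y v] xi_nonzero by (simp add: opapply_def)
qed

lemma pauliE_apply_inj:
  assumes "p > 0" "\<forall>x\<in>states n p. opapply (states n p) (pauliE n p y) u x = opapply (states n p) (pauliE n p y) v x"
    and "x \<in> states n p"
  shows "u x = v x"
proof -
  have "\<forall>x\<in>states n p. opapply (states n p) (pauliE n p y) (\<lambda>x. u x - v x) x = 0"
    using assms(2) by (simp add: opapply_diff)
  from pauliE_apply_eq_0_imp[OF assms(1) this assms(3)] show ?thesis by simp
qed

lemma sum_xi_dotp_eq_0:
  assumes p: "p > 0" and b: "b \<in> states n p" and j0: "j0 \<in> {1..n}" "b j0 \<noteq> 0"
  shows "(\<Sum>x\<in>states n p. xi p (int (dotp n b x))) = 0"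
proof -
  define e where "e = (\<lambda>j. if j = j0 then 1 else 0 :: nat)"
  have "dotp n b e = b j0"
    using j0(1) unfolding dotp_def e_def by (simp add: if_distrib[where f="\<lambda>c. _ * c"] cong: if_cong)
  then have "(\<Sum>x\<in>states n p. xi p (int (dotp n b x)))
      = xi p (int (b j0)) * (\<Sum>x\<in>states n p. xi p (int (dotp n b x)))"
    using sum.reindex_bij_betw[OF bij_betw_translate[OF p, of n e], of "\<lambda>x. xi p (int (dotp n b x))"]
    by (simp add: xi_dotp_translate[OF p] sum_distrib_left)
  moreover have "xi p (int (b j0)) \<noteq> 1"
    using xi_ne_1 j0(2) basisOn_less[OF b j0(1)] by simp
  ultimately show ?thesis
    by (metis mult_cancel_right1)
qed

definition pauli_trace :: "nat \<Rightarrow> nat \<Rightarrow> svec \<Rightarrow> complex" where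
  "pauli_trace n p y = (\<Sum>x\<in>states n p. pauliE n p y x x)"

lemma pauli_trace_zero: "p > 0 \<Longrightarrow> pauli_trace n p ((\<lambda>_. 0), (\<lambda>_. 0)) = of_nat (card (states n p))"
  unfolding pauli_trace_def by (simp add: pauliE_zero idop_def)

lemma pauli_trace_nonzero:
  assumes p: "p > 0" and y: "y \<in> Fvec {1..n} p" and ne: "y \<noteq> ((\<lambda>_. 0), (\<lambda>_. 0))"
  shows "pauli_trace n p y = 0"
proof (cases "\<exists>j\<in>{1..n}. fst y j \<noteq> 0")
  case True
  then obtain j where j: "j \<in> {1..n}" "fst y j \<noteq> 0" by blast
  have "x \<noteq> translate n p (fst y) x" if x: "x \<in> states n p" for x
  proof
    assume "x = translate n p (fst y) x"
    then have "x j = (x j + fst y j) mod p"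
      using j(1) unfolding translate_def by (metis (mono_tags, lifting))
    then have "[x j + fst y j = x j + 0] (mod p)"
      using basisOn_less[OF x j(1)] by (simp add: cong_def)
    then have "fst y j mod p = 0"
      unfolding cong_add_lcancel_nat by (simp add: cong_def)
    moreover have "fst y j < p"
      using y j(1) unfolding Fvec_def basisOn_def by auto
    ultimately show False using j(2) by simp
  qed
  then show ?thesis unfolding pauli_trace_def pauliE_eq[OF p] by simp
next
  case False
  then have a0: "fst y = (\<lambda>_. 0)"
    using y unfolding Fvec_def basisOn_def by (auto simp: fun_eq_iff)
  with ne obtain j where j0: "snd y j \<noteq> 0" by (metis prod.collapse ext)
  moreover have "j \<in> {1..n}"
    using y j0 basisOn_outside unfolding Fvec_def by fastforce
  ultimately have j: "j \<in> {1..n}" "snd y j \<noteq> 0" by auto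
  have sy: "snd y \<in> states n p" using y unfolding Fvec_def by (simp add: mem_Times_iff)
  have "pauli_trace n p y = (\<Sum>x\<in>states n p. xi p (int (dotp n (snd y) x)))"
    unfolding pauli_trace_def pauliE_eq[OF p] a0 by (intro sum.cong) (simp_all add: translate_zero)
  also have "\<dots> = 0"
    by (rule sum_xi_dotp_eq_0[OF p sy j])
  finally show ?thesis .
qed

lemma tensJ_outside_left: "u \<notin> states n p \<Longrightarrow> tensJ n p J Bop u x = 0"
  unfolding tensJ_def by simp

lemma tensJ_outside_right: "x \<notin> states n p \<Longrightarrow> tensJ n p J Bop u x = 0"
  unfolding tensJ_def by simp

lemma opmult_pauliE_tensJ:
  assumes p: "p > 0" and J: "J \<subseteq> {1..n}" and w: "w \<in> Fvec ({1..n} - J) p"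
    and u: "u \<in> states n p" and x: "x \<in> states n p"
  defines "t \<equiv> \<lambda>j. if j \<in> J then u j else x j"
  shows "opmult (states n p) (pauliE n p w) (tensJ n p J Bop) u x
       = pauliE n p w u t * tensJ n p J Bop t x"
proof -
  have t: "t \<in> states n p"
    using u x J unfolding t_def basisOn_def by auto
  have unique: "t' = t"
    if t': "t' \<in> states n p" and nz: "pauliE n p w u t' * tensJ n p J Bop t' x \<noteq> 0" for t'
  proof
    fix j
    from nz have u_eq: "u = translate n p (fst w) t'"
      using pauliE_eq[OF p] by (metis mult_eq_0_iff)
    from nz have "restrict_to t' ({1..n} - J) = restrict_to x ({1..n} - J)"
      unfolding tensJ_def by (auto split: if_splits)
    then have "t' j = x j" if "j \<in> {1..n}" "j \<notin> J"
      using that fun_cong[of _ _ j] unfolding restrict_to_def by fastforce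
    moreover have "t' j = u j" if "j \<in> J"
    proof -
      have "j \<in> {1..n}" "fst w j = 0"
        using that J w basisOn_outside[of "fst w"] unfolding Fvec_def by auto
      then show ?thesis
        using u_eq basisOn_less[OF t'] unfolding translate_def by simp
    qed
    ultimately show "t' j = t j"
      using basisOn_outside[OF t'] basisOn_outside[OF x] unfolding t_def by (cases "j \<in> {1..n}") auto
  qed
  have "(\<Sum>t'\<in>states n p - {t}. pauliE n p w u t' * tensJ n p J Bop t' x) = 0"
    using unique by (intro sum.neutral) blast
  then show ?thesis
    unfolding opmult_def
    using sum.remove[OF finite_states t, of "\<lambda>t'. pauliE n p w u t' * tensJ n p J Bop t' x"] by simp
qed

lemma tensJ_pauliE_commute_on_states:
  assumes p: "p > 0" and J: "J \<subseteq> {1..n}" and w: "w \<in> Fvec ({1..n} - J) p"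
    and u: "u \<in> states n p" and x: "x \<in> states n p"
  shows "opmult (states n p) (tensJ n p J Bop) (pauliE n p w) u x
       = opmult (states n p) (pauliE n p w) (tensJ n p J Bop) u x"
proof -
  define R where "R = {1..n} - J"
  define t0 where "t0 = translate n p (fst w) x"
  define t1 where "t1 = (\<lambda>j. if j \<in> J then u j else x j)"
  have a0: "fst w j = 0" and b0: "snd w j = 0" if "j \<notin> R" for j
    using w that basisOn_outside unfolding Fvec_def R_def by auto
  have t0: "t0 \<in> states n p"
    unfolding t0_def by (rule translate_in_states[OF p])
  have t1: "t1 \<in> states n p"
    using u x J unfolding t1_def basisOn_def by auto
  have "restrict_to t0 J = restrict_to x J"
    using J a0 basisOn_less[OF x] unfolding restrict_to_def t0_def translate_def R_def
    by (auto simp: fun_eq_iff)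
  moreover have "restrict_to t1 J = restrict_to u J" "restrict_to t1 R = restrict_to x R"
    unfolding restrict_to_def t1_def R_def by (auto simp: fun_eq_iff)
  moreover have "dotp n (snd w) t1 = dotp n (snd w) x"
    unfolding dotp_def t1_def R_def using b0 by (intro sum.cong) (auto simp: R_def)
  moreover have "u = translate n p (fst w) t1 \<longleftrightarrow> restrict_to u R = restrict_to t0 R"
  proof -
    have "translate n p (fst w) t1 j = (if j \<in> R then t0 j else u j)" for j
      using a0 basisOn_less[OF u] basisOn_outside[OF u]
      unfolding translate_def t0_def t1_def R_def by auto
    then show ?thesis
      unfolding restrict_to_def by (auto simp: fun_eq_iff)
  qed
  ultimately show ?thesis
    using u x t0 t1
    unfolding opmult_pauliE_right[OF p] opmult_pauliE_tensJ[OF p J w u x, folded t1_def]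
    unfolding tensJ_def pauliE_eq[OF p] R_def[symmetric] t0_def[symmetric]
    by auto
qed

lemma tensJ_pauliE_commute:
  assumes p: "p > 0" and J: "J \<subseteq> {1..n}" and w: "w \<in> Fvec ({1..n} - J) p"
  shows "opmult (states n p) (tensJ n p J Bop) (pauliE n p w)
       = opmult (states n p) (pauliE n p w) (tensJ n p J Bop)"
proof (intro ext)
  fix u x
  show "opmult (states n p) (tensJ n p J Bop) (pauliE n p w) u x
      = opmult (states n p) (pauliE n p w) (tensJ n p J Bop) u x"
  proof (cases "u \<in> states n p \<and> x \<in> states n p")
    case True
    then show ?thesis using tensJ_pauliE_commute_on_states[OF p J w] by blast
  next
    case False
    then show ?thesis unfolding opmult_def
      by (auto simp: tensJ_outside_left tensJ_outside_right pauliE_outside_left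
          pauliE_outside_right intro!: sum.neutral)
  qed
qed

lemma tensJ_pauliE_pauliE_outside:
  assumes p: "p > 0" and IJ: "I \<subseteq> J" and J: "J \<subseteq> {1..n}"
    and e: "e \<in> Fvec I p" and w: "w \<in> Fvec ({1..n} - J) p"
  shows "opapply (states n p) (tensJ n p J Bop)
           (opapply (states n p) (pauliE n p e) (opapply (states n p) (pauliE n p w) v))
       = opapply (states n p) (pauliE n p w)
           (opapply (states n p) (tensJ n p J Bop) (opapply (states n p) (pauliE n p e) v))"
proof -
  have "I \<inter> ({1..n} - J) = {}" using IJ by blast
  then have "opmult (states n p) (pauliE n p e) (pauliE n p w) = opmult (states n p) (pauliE n p w) (pauliE n p e)"
    using pauliE_mult_disjoint[OF p _ e w] pauliE_mult_disjoint[OF p _ w e]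
    by (simp add: vadd_commute Int_commute)
  then have "opapply (states n p) (pauliE n p e) (opapply (states n p) (pauliE n p w) v)
      = opapply (states n p) (pauliE n p w) (opapply (states n p) (pauliE n p e) v)"
    by (simp add: opapply_opmult[OF finite_states, symmetric])
  moreover have "opapply (states n p) (tensJ n p J Bop) (opapply (states n p) (pauliE n p w) v')
      = opapply (states n p) (pauliE n p w) (opapply (states n p) (tensJ n p J Bop) v')" for v'
    by (simp add: opapply_opmult[OF finite_states, symmetric] tensJ_pauliE_commute[OF p J w])
  ultimately show ?thesis by simp
qed

section \<open>Inner products and the Knill--Laflamme condition\<close>

definition inner_on :: "(nat \<Rightarrow> nat) set \<Rightarrow> qvec \<Rightarrow> qvec \<Rightarrow> complex" where
  "inner_on B u v = (\<Sum>x\<in>B. cnj (u x) * v x)"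

lemma inner_on_self: "inner_on B u u = of_real (\<Sum>x\<in>B. (cmod (u x))\<^sup>2)"
proof -
  have "cnj (u x) * u x = complex_of_real ((cmod (u x))\<^sup>2)" for x
    by (metis complex_norm_square mult.commute)
  then show ?thesis unfolding inner_on_def of_real_sum by simp
qed

lemma inner_on_self_eq_0:
  assumes "finite B" "inner_on B u u = 0" "x \<in> B"
  shows "u x = 0"
proof -
  have "(\<Sum>x\<in>B. (cmod (u x))\<^sup>2) = 0" using assms(2) unfolding inner_on_self of_real_eq_0_iff .
  then show ?thesis using assms(1,3) by (simp add: sum_nonneg_eq_0_iff)
qed

lemma cnj_inner_on: "cnj (inner_on B u v) = inner_on B v u"
  unfolding inner_on_def by (simp add: mult.commute)

lemma inner_on_diff_left: "inner_on B (\<lambda>x. u x - v x) w = inner_on B u w - inner_on B v w"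
  unfolding inner_on_def by (simp add: sum_subtractf algebra_simps)

lemma inner_on_diff_right: "inner_on B w (\<lambda>x. u x - v x) = inner_on B w u - inner_on B w v"
  unfolding inner_on_def by (simp add: sum_subtractf algebra_simps)

lemma inner_on_scale_left: "inner_on B (\<lambda>x. a * u x) w = cnj a * inner_on B u w"
  unfolding inner_on_def by (simp add: sum_distrib_left algebra_simps)

lemma inner_on_scale_right: "inner_on B w (\<lambda>x. a * u x) = a * inner_on B w u"
  unfolding inner_on_def by (simp add: sum_distrib_left algebra_simps)

lemma proportional_if_orthogonal_imp_orthogonal:
  assumes fin: "finite B" and x0: "x0 \<in> B" "\<phi> x0 \<noteq> 0"
    and orth: "\<And>\<psi>. inner_on B \<psi> \<phi> = 0 \<Longrightarrow> inner_on B \<psi> f = 0"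
  shows "\<exists>a. \<forall>x\<in>B. f x = a * \<phi> x"
proof -
  define N where "N = inner_on B \<phi> \<phi>"
  have "N \<noteq> 0"
    using inner_on_self_eq_0[OF fin _ x0(1)] x0(2) unfolding N_def by blast
  moreover have "cnj N = N" unfolding N_def by (rule cnj_inner_on)
  ultimately have N: "cnj (inner_on B \<phi> f / N) * N = inner_on B f \<phi>"
    by (simp add: cnj_inner_on)
  define a where "a = inner_on B \<phi> f / N"
  define \<psi> where "\<psi> = (\<lambda>x. f x - a * \<phi> x)"
  have o1: "inner_on B \<psi> \<phi> = 0"
    unfolding \<psi>_def inner_on_diff_left inner_on_scale_left a_def N_def[symmetric] N by simp
  then have "inner_on B \<psi> f = 0" by (rule orth)
  with o1 have "inner_on B \<psi> \<psi> = 0"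
    by (subst (2) \<psi>_def) (simp only: inner_on_diff_right inner_on_scale_right, simp)
  then show ?thesis
    using inner_on_self_eq_0[OF fin] unfolding \<psi>_def by force
qed

lemma sum_outer_quadratic_form:
  fixes B :: "(nat \<Rightarrow> nat) set"
  shows "(\<Sum>x\<in>B. \<Sum>y\<in>B. cnj (\<psi> x) * (\<Sum>i\<in>A. f i x * cnj (f i y)) * \<psi> y)
     = of_real (\<Sum>i\<in>A. (cmod (inner_on B \<psi> (f i)))\<^sup>2)"
proof -
  have "(\<Sum>x\<in>B. \<Sum>y\<in>B. cnj (\<psi> x) * (\<Sum>i\<in>A. f i x * cnj (f i y)) * \<psi> y)
      = (\<Sum>i\<in>A. \<Sum>x\<in>B. \<Sum>y\<in>B. cnj (\<psi> x) * f i x * (cnj (f i y) * \<psi> y))"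
    by (simp add: sum_distrib_left sum_distrib_right mult_ac sum.swap[of _ A])
  also have "\<dots> = (\<Sum>i\<in>A. inner_on B \<psi> (f i) * cnj (inner_on B \<psi> (f i)))"
    unfolding inner_on_def by (simp add: sum_distrib_left sum_distrib_right mult_ac)
  finally show ?thesis
    by (simp only: complex_norm_square[symmetric] of_real_sum)
qed

lemma sum_outer_eq_outer_imp_proportional:
  fixes B :: "(nat \<Rightarrow> nat) set"
  assumes fin: "finite B" and finA: "finite A" and x0: "x0 \<in> B" "\<phi> x0 \<noteq> 0" and c: "c \<noteq> 0"
    and eq: "\<And>x y. x \<in> B \<Longrightarrow> y \<in> B \<Longrightarrow> c * (\<Sum>i\<in>A. f i x * cnj (f i y)) = \<phi> x * cnj (\<phi> y)"
  shows "\<exists>a. (\<forall>i\<in>A. \<forall>x\<in>B. f i x = a i * \<phi> x) \<and> (\<exists>i\<in>A. a i \<noteq> 0)"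
proof -
  have "inner_on B \<psi> (f i) = 0" if \<psi>: "inner_on B \<psi> \<phi> = 0" and i: "i \<in> A" for \<psi> i
  proof -
    have "c * of_real (\<Sum>i\<in>A. (cmod (inner_on B \<psi> (f i)))\<^sup>2)
        = (\<Sum>x\<in>B. \<Sum>y\<in>B. cnj (\<psi> x) * (\<phi> x * cnj (\<phi> y)) * \<psi> y)"
      unfolding sum_outer_quadratic_form[symmetric] sum_distrib_left
      by (intro sum.cong refl) (simp add: eq[symmetric] mult_ac sum_distrib_left)
    also have "\<dots> = inner_on B \<psi> \<phi> * cnj (inner_on B \<psi> \<phi>)"
      unfolding inner_on_def cnj_sum sum_product by (intro sum.cong refl) (simp add: mult_ac)
    also have "\<dots> = 0" using \<psi> by simp
    finally have "c * complex_of_real (\<Sum>i\<in>A. (cmod (inner_on B \<psi> (f i)))\<^sup>2) = 0" .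
    with c have "(\<Sum>i\<in>A. (cmod (inner_on B \<psi> (f i)))\<^sup>2) = 0"
      by (simp only: mult_eq_0_iff of_real_eq_0_iff) blast
    then show ?thesis using finA i by (simp add: sum_nonneg_eq_0_iff)
  qed
  then have "\<forall>i\<in>A. \<exists>a. \<forall>x\<in>B. f i x = a * \<phi> x"
    using proportional_if_orthogonal_imp_orthogonal[of B x0 \<phi>, OF fin x0] by blast
  then obtain a where a: "\<forall>i\<in>A. \<forall>x\<in>B. f i x = a i * \<phi> x"
    by metis
  moreover have "\<exists>i\<in>A. a i \<noteq> 0"
  proof (rule ccontr)
    assume "\<not> (\<exists>i\<in>A. a i \<noteq> 0)"
    then have "\<phi> x0 * cnj (\<phi> x0) = 0" using eq[OF x0(1) x0(1)] a x0(1) by simp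
    then show False using x0 by simp
  qed
  ultimately show ?thesis by blast
qed

lemma opmult_outer_adj:
  "opmult B (opmult B X (outer v)) (adj X) u w = opapply B X v u * cnj (opapply B X v w)"
  unfolding opmult_def opapply_def outer_def adj_def
  by (simp add: sum_distrib_left sum_distrib_right mult_ac)

lemma opmult_scaled_sum:
  "opmult B (opmult B X (\<lambda>u v. c * (\<Sum>e\<in>F. M e u v))) Y x y
     = c * (\<Sum>e\<in>F. opmult B (opmult B X (M e)) Y x y)"
  unfolding opmult_def
  by (simp add: sum_distrib_left sum_distrib_right mult_ac sum.swap[of _ F])

lemma applyR_GammaI_outer:
  "applyR n p J m Bk (GammaI n p I (outer \<phi>)) x y
   = (1 / of_nat p ^ (2 * card I)) * (\<Sum>k<m. \<Sum>e\<in>Fvec I p.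
       opapply (states n p) (tensJ n p J (Bk k)) (opapply (states n p) (pauliE n p e) \<phi>) x *
       cnj (opapply (states n p) (tensJ n p J (Bk k)) (opapply (states n p) (pauliE n p e) \<phi>) y))"
proof -
  have Gamma: "GammaI n p I (outer \<phi>) = (\<lambda>u v. (1 / of_nat p ^ (2 * card I)) *
      (\<Sum>e\<in>Fvec I p. outer (opapply (states n p) (pauliE n p e) \<phi>) u v))"
    by (simp only: GammaI_def opmult_outer_adj) (simp add: outer_def)
  show ?thesis
    unfolding applyR_def opsum_def Gamma opmult_scaled_sum opmult_outer_adj by (simp add: sum_distrib_left)
qed

lemma recovery_imp_proportional:
  assumes p: "p > 0" and I: "finite I"
    and rec: "\<forall>x\<in>states n p. \<forall>y\<in>states n p.
           applyR n p J m Bk (GammaI n p I (outer \<phi>)) x y = outer \<phi> x y"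
    and x0: "x0 \<in> states n p" "\<phi> x0 \<noteq> 0"
  shows "\<exists>a. (\<forall>k<m. \<forall>e\<in>Fvec I p. \<forall>x\<in>states n p.
              opapply (states n p) (tensJ n p J (Bk k)) (opapply (states n p) (pauliE n p e) \<phi>) x
                = a (k, e) * \<phi> x)
           \<and> (\<exists>k<m. \<exists>e\<in>Fvec I p. a (k, e) \<noteq> 0)"
proof -
  define f where "f = (\<lambda>i. opapply (states n p) (tensJ n p J (Bk (fst i)))
                             (opapply (states n p) (pauliE n p (snd i)) \<phi>))"
  have eq: "(1 / of_nat p ^ (2 * card I)) * (\<Sum>i\<in>{..<m} \<times> Fvec I p. f i x * cnj (f i y))
      = \<phi> x * cnj (\<phi> y)" if "x \<in> states n p" "y \<in> states n p" for x y
  proof -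
    have "(\<Sum>i\<in>{..<m} \<times> Fvec I p. f i x * cnj (f i y))
        = (\<Sum>k<m. \<Sum>e\<in>Fvec I p. f (k, e) x * cnj (f (k, e) y))"
      by (simp add: sum.cartesian_product split_def f_def)
    moreover have "applyR n p J m Bk (GammaI n p I (outer \<phi>)) x y = outer \<phi> x y"
      using rec that by blast
    then have "(1 / of_nat p ^ (2 * card I)) * (\<Sum>k<m. \<Sum>e\<in>Fvec I p. f (k, e) x * cnj (f (k, e) y))
        = \<phi> x * cnj (\<phi> y)"
      unfolding applyR_GammaI_outer by (simp add: f_def outer_def)
    ultimately show ?thesis by simp
  qed
  have fin: "finite ({..<m} \<times> Fvec I p)" using I by (simp add: finite_Fvec)
  have c: "(1 / of_nat p ^ (2 * card I) :: complex) \<noteq> 0" using p by simp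
  obtain a where "\<forall>i\<in>{..<m} \<times> Fvec I p. \<forall>x\<in>states n p. f i x = a i * \<phi> x"
    and "\<exists>i\<in>{..<m} \<times> Fvec I p. a i \<noteq> 0"
    using sum_outer_eq_outer_imp_proportional[of "states n p" "{..<m} \<times> Fvec I p" x0 \<phi>
        "1 / of_nat p ^ (2 * card I)" f, OF finite_states fin x0 c eq] by blast
  then show ?thesis unfolding f_def by auto
qed

section \<open>Stabilizer codes\<close>

(* |C| times the orthogonal projector onto Q(C). *)
definition code_projector :: "nat \<Rightarrow> nat \<Rightarrow> svec set \<Rightarrow> (qop \<Rightarrow> complex) \<Rightarrow> qop" where
  "code_projector n p C lam = (\<lambda>u x. \<Sum>c\<in>C. inverse (lam (pauliE n p c)) * pauliE n p c u x)"

lemma code_projector_outside: "u \<notin> states n p \<Longrightarrow> code_projector n p C lam u x = 0"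
  unfolding code_projector_def by (simp add: pauliE_outside_left)

lemma opmult_code_projector:
  "opmult B M (code_projector n p C lam) u x
     = (\<Sum>c\<in>C. inverse (lam (pauliE n p c)) * opmult B M (pauliE n p c) u x)"
  unfolding opmult_def code_projector_def
  by (simp add: sum_distrib_left mult_ac sum.swap[of _ C])

locale stabilizer_code =
  fixes n p :: nat and C :: "svec set" and lam :: "qop \<Rightarrow> complex"
  assumes p_pos: "p > 0"
    and code: "is_code n p C"
    and character: "is_stab_character n p C lam"
begin

lemma code_subset: "C \<subseteq> Fvec {1..n} p"
  using code unfolding is_code_def by blast

lemma code_zero: "((\<lambda>_. 0), (\<lambda>_. 0)) \<in> C"
  using code unfolding is_code_def by blast

lemma code_vadd: "y \<in> C \<Longrightarrow> z \<in> C \<Longrightarrow> vadd p y z \<in> C"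
  using code unfolding is_code_def by blast

lemma code_vscale: "c < p \<Longrightarrow> y \<in> C \<Longrightarrow> vscale p c y \<in> C"
  using code unfolding is_code_def by blast

lemma finite_code: "finite C"
  using code_subset finite_Fvec finite_subset by blast

lemma lam_mult:
  "X \<in> stabGroup n p C \<Longrightarrow> Y \<in> stabGroup n p C \<Longrightarrow> lam (opmult (states n p) X Y) = lam X * lam Y"
  using character unfolding is_stab_character_def by blast

lemma lam_scalar: "lam (scaleop (xi p l) (idop (states n p))) = xi p l"
proof -
  let ?s = "\<lambda>l. scaleop (xi p l) (idop (states n p))"
  have lam1: "lam (?s 1) = xi p 1"
    using character unfolding is_stab_character_def by blast
  have step: "lam (?s (l + 1)) = xi p 1 * lam (?s l)" for l
  proof -
    have "?s (l + 1) = opmult (states n p) (?s 1) (?s l)"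
      by (subst opmult_scaleop_idop) (simp_all add: finite_states idop_def scaleop_def xi_add[symmetric] mult_ac)
    then show ?thesis using lam_mult[OF stabGroup.scal stabGroup.scal] lam1 by simp
  qed
  have "lam (?s 0) = 1"
    using step[of 0] lam1 xi_nonzero[of p 1] by simp
  then have nat: "lam (?s (int k)) = xi p (int k)" for k
  proof (induction k)
    case (Suc k)
    then show ?case using step[of "int k"] by (simp add: xi_add add.commute)
  qed simp
  have "xi p l = xi p (int (nat (l mod int p)))"
    using p_pos by (intro xi_cong) (simp_all add: cong_def)
  then show ?thesis using nat by metis
qed

lemma lam_pauliE_zero: "lam (pauliE n p ((\<lambda>_. 0), (\<lambda>_. 0))) = 1"
  using lam_scalar[of 0] by (simp add: pauliE_zero[OF p_pos])

lemma lam_pauliE_mult: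
  assumes "c \<in> C" "d \<in> C"
  shows "lam (pauliE n p c) * lam (pauliE n p d)
       = xi p (int (dotp n (snd c) (fst d))) * lam (pauliE n p (vadd p c d))"
proof -
  have "opmult (states n p) (pauliE n p c) (pauliE n p d)
      = opmult (states n p) (scaleop (xi p (int (dotp n (snd c) (fst d)))) (idop (states n p)))
          (pauliE n p (vadd p c d))"
    by (simp add: pauliE_mult[OF p_pos] opmult_scaleop_idop finite_states pauliE_outside_left)
  then show ?thesis
    using lam_mult[OF stabGroup.gen stabGroup.gen, OF assms]
      lam_mult[OF stabGroup.scal stabGroup.gen[OF code_vadd[OF assms]]] lam_scalar
    by simp
qed

lemma lam_pauliE_nonzero:
  assumes "c \<in> C"
  shows "lam (pauliE n p c) \<noteq> 0"
proof
  assume "lam (pauliE n p c) = 0"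
  moreover have "vscale p (p - 1) c \<in> C" using code_vscale[OF _ assms] p_pos by simp
  ultimately show False
    using lam_pauliE_mult[OF _ assms, of "vscale p (p - 1) c"] xi_nonzero
    by (simp add: vadd_vscale_minus_one[OF p_pos] lam_pauliE_zero)
qed

lemma stabQ_eigen: "v \<in> stabQ n p C lam \<Longrightarrow> X \<in> stabGroup n p C \<Longrightarrow> x \<in> states n p \<Longrightarrow>
   opapply (states n p) X v x = lam X * v x"
  unfolding stabQ_def by blast

lemma stabQ_add: "v \<in> stabQ n p C lam \<Longrightarrow> w \<in> stabQ n p C lam \<Longrightarrow> (\<lambda>x. v x + w x) \<in> stabQ n p C lam"
  unfolding stabQ_def by (simp add: opapply_add distrib_left)

lemma pauliE_dual_commute:
  assumes c: "c \<in> C" and y: "y \<in> symp_dual n p C"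
  shows "opmult (states n p) (pauliE n p c) (pauliE n p y) = opmult (states n p) (pauliE n p y) (pauliE n p c)"
proof -
  have "[dotp n (snd c) (fst y) = dotp n (snd y) (fst c)] (mod p)"
    using y c unfolding symp_dual_def symp_orth_def dotp_def cong_def by (simp add: mult.commute)
  then show ?thesis
    by (simp add: pauliE_mult[OF p_pos] xi_nat_cong[OF p_pos] vadd_commute)
qed

lemma stabGroup_commute_pauliE_dual:
  assumes y: "y \<in> symp_dual n p C" and X: "X \<in> stabGroup n p C"
  shows "opmult (states n p) X (pauliE n p y) = opmult (states n p) (pauliE n p y) X"
  using X
proof (induction rule: stabGroup.induct)
  case (scal l)
  then show ?case
    by (simp add: opmult_scaleop_idop opmult_scaleop_idop_right finite_states
        pauliE_outside_left pauliE_outside_right)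
next
  case (gen c)
  then show ?case by (rule pauliE_dual_commute[OF _ y])
next
  case (mult X Y)
  then show ?case by (metis opmult_assoc[OF finite_states])
qed

lemma pauliE_dual_preserves_stabQ:
  assumes y: "y \<in> symp_dual n p C" and v: "v \<in> stabQ n p C lam"
  shows "opapply (states n p) (pauliE n p y) v \<in> stabQ n p C lam"
  unfolding stabQ_def
proof (intro CollectI conjI allI impI ballI)
  fix x assume "x \<notin> states n p"
  then show "opapply (states n p) (pauliE n p y) v x = 0"
    by (simp add: opapply_def pauliE_outside_left)
next
  fix X x assume X: "X \<in> stabGroup n p C" and "x \<in> states n p"
  have "opapply (states n p) X (opapply (states n p) (pauliE n p y) v)
      = opapply (states n p) (pauliE n p y) (opapply (states n p) X v)"
    by (simp add: opapply_opmult[OF finite_states, symmetric] stabGroup_commute_pauliE_dual[OF y X])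
  also have "\<dots> = opapply (states n p) (pauliE n p y) (\<lambda>t. lam X * v t)"
    using stabQ_eigen[OF v X] by (rule opapply_cong)
  finally show "opapply (states n p) X (opapply (states n p) (pauliE n p y) v) x
      = lam X * opapply (states n p) (pauliE n p y) v x"
    by (simp add: opapply_scale)
qed

lemma bij_betw_vadd_code: "c' \<in> C \<Longrightarrow> bij_betw (vadd p c') C C"
  unfolding bij_betw_def
proof
  assume c': "c' \<in> C"
  show inj: "inj_on (vadd p c') C"
    using vadd_left_cancel[of c' "{1..n}" p] code_subset c' by (intro inj_onI) blast
  show "vadd p c' ` C = C"
    by (rule endo_inj_surj[OF finite_code _ inj]) (use code_vadd c' in blast)
qed

lemma pauliE_mult_code_projector:
  assumes c': "c' \<in> C"
  shows "opmult (states n p) (pauliE n p c') (code_projector n p C lam)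
       = scaleop (lam (pauliE n p c')) (code_projector n p C lam)"
proof (intro ext)
  fix u x
  have "inverse (lam (pauliE n p c)) * opmult (states n p) (pauliE n p c') (pauliE n p c) u x
      = lam (pauliE n p c') * (inverse (lam (pauliE n p (vadd p c' c))) * pauliE n p (vadd p c' c) u x)"
    if c: "c \<in> C" for c
    using lam_pauliE_mult[OF c' c] lam_pauliE_nonzero[OF c] lam_pauliE_nonzero[OF code_vadd[OF c' c]]
    by (simp add: pauliE_mult[OF p_pos] scaleop_def field_simps)
  then have "opmult (states n p) (pauliE n p c') (code_projector n p C lam) u x
      = lam (pauliE n p c') * (\<Sum>c\<in>C. inverse (lam (pauliE n p (vadd p c' c))) * pauliE n p (vadd p c' c) u x)"
    unfolding opmult_code_projector sum_distrib_left by (rule sum.cong[OF refl])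
  also have "\<dots> = scaleop (lam (pauliE n p c')) (code_projector n p C lam) u x"
    unfolding code_projector_def scaleop_def
    using sum.reindex_bij_betw[OF bij_betw_vadd_code[OF c'], of "\<lambda>d. inverse (lam (pauliE n p d)) * pauliE n p d u x"]
    by simp
  finally show "opmult (states n p) (pauliE n p c') (code_projector n p C lam) u x
      = scaleop (lam (pauliE n p c')) (code_projector n p C lam) u x" .
qed

lemma stabGroup_mult_code_projector:
  "X \<in> stabGroup n p C \<Longrightarrow>
     opmult (states n p) X (code_projector n p C lam) = scaleop (lam X) (code_projector n p C lam)"
proof (induction rule: stabGroup.induct)
  case (scal l)
  then show ?case
    by (simp add: opmult_scaleop_idop finite_states code_projector_outside lam_scalar)
next
  case (gen c)
  then show ?case by (rule pauliE_mult_code_projector)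
next
  case (mult X Y)
  then show ?case
    by (simp add: opmult_assoc[OF finite_states] opmult_scaleop_right lam_mult mult.commute)
qed

lemma code_projector_column_in_stabQ:
  "(\<lambda>u. code_projector n p C lam u x) \<in> stabQ n p C lam"
  unfolding stabQ_def
  by (simp add: code_projector_outside opapply_column stabGroup_mult_code_projector scaleop_def)

lemma trace_code_projector:
  "(\<Sum>x\<in>states n p. code_projector n p C lam x x) = of_nat (card (states n p))"
proof -
  have "(\<Sum>x\<in>states n p. code_projector n p C lam x x)
      = (\<Sum>c\<in>C. inverse (lam (pauliE n p c)) * pauli_trace n p c)"
    unfolding code_projector_def pauli_trace_def sum_distrib_left by (rule sum.swap)
  also have "\<dots> = (\<Sum>c\<in>C. if c = ((\<lambda>_. 0), (\<lambda>_. 0)) then of_nat (card (states n p)) else 0)"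
  proof (intro sum.cong refl)
    fix c assume "c \<in> C"
    then show "inverse (lam (pauliE n p c)) * pauli_trace n p c
        = (if c = ((\<lambda>_. 0), (\<lambda>_. 0)) then of_nat (card (states n p)) else 0)"
      using code_subset pauli_trace_nonzero[OF p_pos, of c n] pauli_trace_zero[OF p_pos] lam_pauliE_zero
      by auto
  qed
  finally show ?thesis using finite_code code_zero by simp
qed

lemma trace_pauliE_mult_code_projector:
  assumes z: "z \<in> Fvec {1..n} p" and nz: "\<forall>c\<in>C. vadd p z c \<noteq> ((\<lambda>_. 0), (\<lambda>_. 0))"
  shows "(\<Sum>x\<in>states n p. opmult (states n p) (pauliE n p z) (code_projector n p C lam) x x) = 0"
proof -
  have "(\<Sum>x\<in>states n p. opmult (states n p) (pauliE n p z) (code_projector n p C lam) x x)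
      = (\<Sum>c\<in>C. inverse (lam (pauliE n p c)) * xi p (int (dotp n (snd z) (fst c)))
                * pauli_trace n p (vadd p z c))"
    unfolding opmult_code_projector pauliE_mult[OF p_pos] pauli_trace_def scaleop_def
    by (subst sum.swap) (simp add: sum_distrib_left mult_ac)
  also have "\<dots> = 0"
    using nz code_subset vadd_Fvec[OF p_pos z] by (intro sum.neutral) (auto simp: pauli_trace_nonzero[OF p_pos])
  finally show ?thesis .
qed

lemma scalar_pauliE_in_code:
  assumes z: "z \<in> Fvec {1..n} p"
    and scalar: "\<forall>\<phi>\<in>stabQ n p C lam. \<exists>s. \<forall>x\<in>states n p. opapply (states n p) (pauliE n p z) \<phi> x = s * \<phi> x"
  shows "z \<in> C"
proof (rule ccontr)
  assume "z \<notin> C"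
  have nz: "\<forall>c\<in>C. vadd p z c \<noteq> ((\<lambda>_. 0), (\<lambda>_. 0))"
  proof (intro ballI notI)
    fix c assume c: "c \<in> C" and "vadd p z c = ((\<lambda>_. 0), (\<lambda>_. 0))"
    then have "z = vscale p (p - 1) c" using vadd_eq_0_imp[OF p_pos z] code_subset by blast
    then show False using code_vscale[OF _ c] p_pos \<open>z \<notin> C\<close> by simp
  qed
  let ?col = "\<lambda>x u. code_projector n p C lam u x"
  have "(\<lambda>_. 0) \<in> states n p" using p_pos unfolding basisOn_def by simp
  then have card: "card (states n p) \<noteq> 0"
    using finite_states by (metis card_0_eq empty_iff)
  then obtain x0 where x0: "x0 \<in> states n p" "?col x0 x0 \<noteq> 0"
    using trace_code_projector by (metis (no_types, lifting) of_nat_eq_0_iff sum.neutral)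
  then obtain s0 where s0: "\<forall>x\<in>states n p. opapply (states n p) (pauliE n p z) (?col x0) x = s0 * ?col x0 x"
    using scalar code_projector_column_in_stabQ by blast
  have "opmult (states n p) (pauliE n p z) (code_projector n p C lam) u x = s0 * ?col x u"
    if "u \<in> states n p" for x u
    using common_eigenvalue[OF stabQ_add scalar code_projector_column_in_stabQ x0 s0
        code_projector_column_in_stabQ] that
    unfolding opapply_column by blast
  then have "s0 * of_nat (card (states n p)) = 0"
    using trace_pauliE_mult_code_projector[OF z nz]
    by (simp add: trace_code_projector flip: sum_distrib_left)
  then have "\<forall>x\<in>states n p. opapply (states n p) (pauliE n p z) (?col x0) x = 0"
    using s0 card by simp
  then show False
    using pauliE_apply_eq_0_imp[OF p_pos] x0 by blast
qed

lemma recovery_pauliE_scalar_nonzero: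
  assumes rec: "\<forall>\<phi>\<in>stabQ n p C lam. \<forall>x\<in>states n p. \<forall>y\<in>states n p.
           applyR n p J m Bk (GammaI n p I (outer \<phi>)) x y = outer \<phi> x y"
    and I: "finite I" "I \<subseteq> J" and J: "J \<subseteq> {1..n}"
    and y: "y \<in> symp_dual n p C"
    and z: "z \<in> Fvec I p" and w: "w \<in> Fvec ({1..n} - J) p" and y_eq: "vadd p w z = y"
    and \<phi>: "\<phi> \<in> stabQ n p C lam" and x0: "x0 \<in> states n p" "\<phi> x0 \<noteq> 0"
  shows "\<exists>s. \<forall>x\<in>states n p. opapply (states n p) (pauliE n p z) \<phi> x = s * \<phi> x"
proof -
  let ?A = "opapply (states n p)"
  define \<psi> where "\<psi> = ?A (pauliE n p w) (?A (pauliE n p z) \<phi>)"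
  have "({1..n} - J) \<inter> I = {}" using I(2) by blast
  then have "opmult (states n p) (pauliE n p w) (pauliE n p z) = pauliE n p y"
    using pauliE_mult_disjoint[OF p_pos _ w z] y_eq by simp
  then have \<psi>_eq: "\<psi> = ?A (pauliE n p y) \<phi>"
    unfolding \<psi>_def by (simp add: opapply_opmult[OF finite_states, symmetric])
  have "\<not> (\<forall>x\<in>states n p. \<psi> x = 0)"
    using pauliE_apply_eq_0_imp[OF p_pos, of n y \<phi> x0] x0 unfolding \<psi>_eq by blast
  then obtain x1 where x1: "x1 \<in> states n p" "\<psi> x1 \<noteq> 0" by blast
  have \<psi>: "\<psi> \<in> stabQ n p C lam"
    unfolding \<psi>_eq by (rule pauliE_dual_preserves_stabQ[OF y \<phi>])
  obtain a where a: "\<forall>k<m. \<forall>e\<in>Fvec I p. \<forall>x\<in>states n p.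
      ?A (tensJ n p J (Bk k)) (?A (pauliE n p e) \<phi>) x = a (k, e) * \<phi> x"
    using recovery_imp_proportional[OF p_pos I(1) bspec[OF rec \<phi>] x0] by blast
  obtain b k e where b: "\<forall>x\<in>states n p. ?A (tensJ n p J (Bk k)) (?A (pauliE n p e) \<psi>) x = b * \<psi> x"
    and k: "k < m" and e: "e \<in> Fvec I p" and b0: "b \<noteq> 0"
    using recovery_imp_proportional[OF p_pos I(1) bspec[OF rec \<psi>] x1] by blast
  define c where "c = xi p (int (dotp n (snd e) (fst z))) * a (k, vadd p e z)"
  have "?A (pauliE n p e) (?A (pauliE n p z) \<phi>)
      = (\<lambda>x. xi p (int (dotp n (snd e) (fst z))) * ?A (pauliE n p (vadd p e z)) \<phi> x)"
    by (simp add: opapply_opmult[OF finite_states, symmetric] pauliE_mult[OF p_pos] opapply_scaleop)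
  then have "?A (tensJ n p J (Bk k)) (?A (pauliE n p e) (?A (pauliE n p z) \<phi>)) x = c * \<phi> x"
    if "x \<in> states n p" for x
    using a k vadd_Fvec[OF p_pos e z] that unfolding c_def by (simp add: opapply_scale)
  then have "?A (tensJ n p J (Bk k)) (?A (pauliE n p e) \<psi>) = ?A (pauliE n p w) (\<lambda>x. c * \<phi> x)"
    unfolding \<psi>_def tensJ_pauliE_pauliE_outside[OF p_pos I(2) J e w] by (rule opapply_cong)
  then have "\<forall>x\<in>states n p. ?A (pauliE n p w) (\<lambda>t. c * \<phi> t) x
      = ?A (pauliE n p w) (\<lambda>t. b * ?A (pauliE n p z) \<phi> t) x"
    using b unfolding \<psi>_def opapply_scale by simp
  then have "c * \<phi> x = b * ?A (pauliE n p z) \<phi> x" if "x \<in> states n p" for x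
    using pauliE_apply_inj[OF p_pos _ that] by blast
  then show ?thesis
    using b0 by (intro exI[of _ "c / b"]) (simp add: field_simps)
qed

lemma recovery_pauliE_scalar:
  assumes rec: "\<forall>\<phi>\<in>stabQ n p C lam. \<forall>x\<in>states n p. \<forall>y\<in>states n p.
           applyR n p J m Bk (GammaI n p I (outer \<phi>)) x y = outer \<phi> x y"
    and I: "finite I" "I \<subseteq> J" and J: "J \<subseteq> {1..n}"
    and y: "y \<in> symp_dual n p C"
    and z: "z \<in> Fvec I p" and w: "w \<in> Fvec ({1..n} - J) p" and y_eq: "vadd p w z = y"
    and \<phi>: "\<phi> \<in> stabQ n p C lam"
  shows "\<exists>s. \<forall>x\<in>states n p. opapply (states n p) (pauliE n p z) \<phi> x = s * \<phi> x"
proof (cases "\<forall>x\<in>states n p. \<phi> x = 0")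
  case True
  then have "opapply (states n p) (pauliE n p z) \<phi> = opapply (states n p) (pauliE n p z) (\<lambda>x. 0 * \<phi> x)"
    by (intro opapply_cong) simp
  then show ?thesis by (intro exI[of _ 0]) (simp add: opapply_def)
next
  case False
  then show ?thesis
    using recovery_pauliE_scalar_nonzero[OF rec I J y z w y_eq \<phi>] by blast
qed

lemma recovery_restriction_in_code:
  assumes rec: "\<forall>\<phi>\<in>stabQ n p C lam. \<forall>x\<in>states n p. \<forall>y\<in>states n p.
           applyR n p J m Bk (GammaI n p I (outer \<phi>)) x y = outer \<phi> x y"
    and IJ: "I \<subseteq> J" and J: "J \<subseteq> {1..n}"
    and y: "y \<in> symp_dual n p C" and supp: "supp y \<inter> J \<subseteq> I"
  shows "proj I y \<in> C"
proof (rule scalar_pauliE_in_code)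
  have yF: "y \<in> Fvec {1..n} p" using y unfolding symp_dual_def by blast
  have I: "I \<subseteq> {1..n}" using IJ J by blast
  then show "proj I y \<in> Fvec {1..n} p"
    using proj_in_Fvec[OF yF I] Fvec_mono[OF p_pos I] by blast
  show "\<forall>\<phi>\<in>stabQ n p C lam. \<exists>s. \<forall>x\<in>states n p.
      opapply (states n p) (pauliE n p (proj I y)) \<phi> x = s * \<phi> x"
    using recovery_pauliE_scalar[OF rec finite_subset[OF I finite_atLeastAtMost] IJ J y
        proj_in_Fvec[OF yF I] proj_in_Fvec[OF yF Diff_subset] vadd_proj_split[OF yF IJ supp]]
    by blast
qed

end

theorem proposition17:
  fixes p n :: nat and C :: "svec set" and I J :: "nat set" and lam :: "qop \<Rightarrow> complex"
  assumes "prime p"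
    and "is_code n p C"
    and "C \<subseteq> symp_dual n p C"
    and "is_stab_character n p C lam"
    and "I \<noteq> {}" and "I \<subset> J" and "J \<subset> {1..n}"
    and "locally_recoverable n p I J (stabQ n p C lam)"
  shows "shorten I (puncture J (symp_dual n p C)) = shorten I C"
proof -
  interpret stabilizer_code n p C lam
    using assms(1,2,4) by unfold_locales (simp_all add: prime_gt_0_nat)
  have IJ: "I \<subseteq> J" and J: "J \<subseteq> {1..n}" using assms(6,7) by auto
  obtain m Bk where rec: "\<forall>\<phi>\<in>stabQ n p C lam. \<forall>x\<in>states n p. \<forall>y\<in>states n p.
      applyR n p J m Bk (GammaI n p I (outer \<phi>)) x y = outer \<phi> x y"
    using assms(8) unfolding locally_recoverable_def by blast
  show ?thesis
    using recovery_restriction_in_code[OF rec IJ J] by (rule shorten_puncture_eq_shorten[OF IJ assms(3)])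
qed

end
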